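(* Let $Y$ be a Young diagram. For any 2-cover $P$ of $H(Y)$ there exists a 2-cover $P'$ of $H(Y)$ such that $|P'|=|P|$ and $P'\cap(C\times S)$ is closed down.
   Context: For $Y$ with row lengths $a_1\ge\cdots\ge a_m\ge0$, $H(Y)$ has vertex sides $R=\{r_1,\dots,r_m\}$, $C=\{c_1,\dots,c_{a_1}\}$, $S=\{s_1,\dots,s_{a_1}\}$ and edges $\{r_i,c_j,s_k\}$ for $1\le i\le m$, $1\le j,k\le a_i$. A 2-cover of $H(Y)$ is a set of 2-element vertex sets such that every edge contains a member of it. $C\times S$ is the set of pairs $c_js_k$. A set $\Gamma\subseteq C\times S$ is closed down if $c_ps_q\in\Gamma$ implies $c_{p'}s_{q'}\in\Gamma$ for all $p'\le p$, $q'\le q$. *)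

theory Defs
  imports Main
begin

text \<open>Vertices of H(Y): r_i, c_j, s_k (indices 1-based as in the paper).\<close>
datatype vert = R nat | C nat | S nat

text \<open>A Young diagram is given by its list of row lengths a_1 \<ge> ... \<ge> a_m \<ge> 0
  (list element i-1 is a_i).\<close>
definition young :: "nat list \<Rightarrow> bool" where
  "young a \<longleftrightarrow> sorted_wrt (\<ge>) a"

definition first_row :: "nat list \<Rightarrow> nat" where
  "first_row a = (if a = [] then 0 else hd a)"

definition verts :: "nat list \<Rightarrow> vert set" where
  "verts a = R ` {1..length a} \<union> C ` {1..first_row a} \<union> S ` {1..first_row a}"

definition edges :: "nat list \<Rightarrow> vert set set" where
  "edges a = {{R i, C j, S k} | i j k. 1 \<le> i \<and> i \<le> length a
      \<and> 1 \<le> j \<and> j \<le> a ! (i - 1) \<and> 1 \<le> k \<and> k \<le> a ! (i - 1)}"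

definition two_cover :: "nat list \<Rightarrow> vert set set \<Rightarrow> bool" where
  "two_cover a P \<longleftrightarrow> (\<forall>p\<in>P. p \<subseteq> verts a \<and> card p = 2) \<and> (\<forall>e\<in>edges a. \<exists>p\<in>P. p \<subseteq> e)"

definition CS :: "nat list \<Rightarrow> vert set set" where
  "CS a = {{C j, S k} | j k. 1 \<le> j \<and> j \<le> first_row a \<and> 1 \<le> k \<and> k \<le> first_row a}"

definition closed_down :: "vert set set \<Rightarrow> bool" where
  "closed_down \<Gamma> \<longleftrightarrow> (\<forall>p q p' q'. {C p, S q} \<in> \<Gamma> \<longrightarrow> 1 \<le> p' \<longrightarrow> p' \<le> p \<longrightarrow> 1 \<le> q' \<longrightarrow> q' \<le> q
      \<longrightarrow> {C p', S q'} \<in> \<Gamma>)"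

end

theory Submission
  imports Defs
begin

text \<open>For row \<open>i\<close> of a cover \<open>P\<close> let \<open>A\<^sub>i\<close> (resp. \<open>B\<^sub>i\<close>) be the cells \<open>j \<le> a\<^sub>i\<close> with \<open>r\<^sub>ic\<^sub>j \<notin> P\<close>
  (resp. \<open>r\<^sub>is\<^sub>j \<notin> P\<close>). The edge \<open>r\<^sub>ic\<^sub>js\<^sub>k\<close> with \<open>j \<in> A\<^sub>i\<close>, \<open>k \<in> B\<^sub>i\<close> can only be covered by \<open>c\<^sub>js\<^sub>k\<close>,
  so \<open>P\<close> contains \<open>\<Union>\<^sub>i A\<^sub>i \<times> B\<^sub>i\<close> besides \<open>\<Sum>\<^sub>i (a\<^sub>i - |A\<^sub>i|) + (a\<^sub>i - |B\<^sub>i|)\<close> pairs through \<open>R\<close>.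
  Moving \<open>A\<^sub>i\<close>, \<open>B\<^sub>i\<close> to the initial segments \<open>[|A\<^sub>i|]\<close>, \<open>[|B\<^sub>i|]\<close> yields a "staircase" cover whose
  \<open>C \<times> S\<close> part \<open>\<Union>\<^sub>i [|A\<^sub>i|] \<times> [|B\<^sub>i|]\<close> is closed down; counting fibre by fibre, this
  compression does not increase the size of the union. Finally the staircase cover is padded
  back to size \<open>|P|\<close>: a pair outside \<open>C \<times> S\<close>, or a missing pair of \<open>C \<times> S\<close> with least index sum,
  can always be added without destroying closedness.\<close>

lemma card_UN_initial_segments_le:
  assumes "finite I" and "\<And>i. i \<in> I \<Longrightarrow> finite (B i)"
  shows "card (\<Union>i\<in>I. {1..card (B i)}) \<le> card (\<Union>i\<in>I. B i)"
proof (cases "I = {}")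
  case False
  have "Max ((\<lambda>i. card (B i)) ` I) \<in> (\<lambda>i. card (B i)) ` I"
    using assms(1) False by (intro Max_in) auto
  then obtain i0 where i0: "i0 \<in> I" and "card (B i0) = Max ((\<lambda>i. card (B i)) ` I)"
    by auto
  then have max: "card (B i) \<le> card (B i0)" if "i \<in> I" for i
    using assms(1) that by simp
  have "(\<Union>i\<in>I. {1..card (B i)}) = {1..card (B i0)}"
    using i0 max by fastforce
  then have "card (\<Union>i\<in>I. {1..card (B i)}) = card (B i0)"
    by simp
  also have "\<dots> \<le> card (\<Union>i\<in>I. B i)"
    using i0 assms by (intro card_mono) auto
  finally show ?thesis .
qed simp

lemma card_UN_Times_compress_right:
  assumes "finite I" and "\<And>i. i \<in> I \<Longrightarrow> finite (A i)" and "\<And>i. i \<in> I \<Longrightarrow> finite (B i)"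
  shows "card (\<Union>i\<in>I. A i \<times> {1..card (B i)}) \<le> card (\<Union>i\<in>I. A i \<times> B i)"
proof -
  define J where "J = (\<Union>i\<in>I. A i)"
  define I\<^sub>j where "I\<^sub>j j = {i\<in>I. j \<in> A i}" for j
  have "(\<Union>i\<in>I. A i \<times> {1..card (B i)}) = Sigma J (\<lambda>j. \<Union>i\<in>I\<^sub>j j. {1..card (B i)})"
    "(\<Union>i\<in>I. A i \<times> B i) = Sigma J (\<lambda>j. \<Union>i\<in>I\<^sub>j j. B i)"
    by (auto simp: J_def I\<^sub>j_def)
  moreover have "finite J" "\<And>j. finite (I\<^sub>j j)"
    using assms by (auto simp: J_def I\<^sub>j_def)
  moreover have "card (\<Union>i\<in>I\<^sub>j j. {1..card (B i)}) \<le> card (\<Union>i\<in>I\<^sub>j j. B i)" for j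
    using assms(3) \<open>finite (I\<^sub>j j)\<close> by (intro card_UN_initial_segments_le) (auto simp: I\<^sub>j_def)
  ultimately show ?thesis
    using assms(3) by (simp add: I\<^sub>j_def sum_mono)
qed

lemma card_UN_Times_compress_left:
  assumes "finite I" and "\<And>i. i \<in> I \<Longrightarrow> finite (A i)" and "\<And>i. i \<in> I \<Longrightarrow> finite (B i)"
  shows "card (\<Union>i\<in>I. {1..card (A i)} \<times> B i) \<le> card (\<Union>i\<in>I. A i \<times> B i)"
proof -
  have "(\<Union>i\<in>I. {1..card (A i)} \<times> B i) = prod.swap ` (\<Union>i\<in>I. B i \<times> {1..card (A i)})"
    "(\<Union>i\<in>I. A i \<times> B i) = prod.swap ` (\<Union>i\<in>I. B i \<times> A i)"
    by auto
  then show ?thesis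
    using card_UN_Times_compress_right[of I B A] assms by (simp add: card_image)
qed

lemma card_UN_Times_compress:
  assumes "finite I" and "\<And>i. i \<in> I \<Longrightarrow> finite (A i)" and "\<And>i. i \<in> I \<Longrightarrow> finite (B i)"
  shows "card (\<Union>i\<in>I. {1..card (A i)} \<times> {1..card (B i)}) \<le> card (\<Union>i\<in>I. A i \<times> B i)"
  using card_UN_Times_compress_left[of I A "\<lambda>i. {1..card (B i)}"]
    card_UN_Times_compress_right[of I A B] assms
  by simp

lemma young_nth_le_first_row:
  assumes "young a" and "i < length a"
  shows "a ! i \<le> first_row a"
  using assms sorted_wrt_nth_less[of "(\<ge>)" a 0 i]
  by (cases i) (auto simp: young_def first_row_def hd_conv_nth)

definition vertex_pairs :: "nat list \<Rightarrow> vert set set" where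
  "vertex_pairs a = {p. p \<subseteq> verts a \<and> card p = 2}"

lemma finite_vertex_pairs: "finite (vertex_pairs a)"
  by (rule finite_subset[of _ "Pow (verts a)"]) (auto simp: vertex_pairs_def verts_def)

lemma two_cover_subset_vertex_pairs: "two_cover a P \<Longrightarrow> P \<subseteq> vertex_pairs a"
  by (auto simp: two_cover_def vertex_pairs_def)

lemma two_cover_finite: "two_cover a P \<Longrightarrow> finite P"
  using finite_subset[OF two_cover_subset_vertex_pairs finite_vertex_pairs] .

lemma CS_subset_vertex_pairs: "CS a \<subseteq> vertex_pairs a"
  by (auto simp: CS_def vertex_pairs_def verts_def)

lemma two_cover_insert: "two_cover a P \<Longrightarrow> x \<in> vertex_pairs a \<Longrightarrow> two_cover a (insert x P)"
  by (auto simp: two_cover_def vertex_pairs_def)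

lemma C_S_in_CS_iff:
  "{C j, S k} \<in> CS a \<longleftrightarrow> 1 \<le> j \<and> j \<le> first_row a \<and> 1 \<le> k \<and> k \<le> first_row a"
  by (auto simp: CS_def doubleton_eq_iff)

lemma closed_down_insert:
  assumes "closed_down \<Gamma>"
    and "\<And>p q. 1 \<le> p \<Longrightarrow> p \<le> j \<Longrightarrow> 1 \<le> q \<Longrightarrow> q \<le> k \<Longrightarrow> (p, q) \<noteq> (j, k) \<Longrightarrow> {C p, S q} \<in> \<Gamma>"
  shows "closed_down (insert {C j, S k} \<Gamma>)"
  using assms unfolding closed_down_def by (auto simp: doubleton_eq_iff)

lemma two_cover_closed_down_grow:
  assumes cover: "two_cover a P" and closed: "closed_down (P \<inter> CS a)"
    and less: "card P < card (vertex_pairs a)"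
  shows "\<exists>P'. two_cover a P' \<and> card P' = Suc (card P) \<and> closed_down (P' \<inter> CS a)"
proof -
  have "P \<subseteq> vertex_pairs a"
    using cover by (rule two_cover_subset_vertex_pairs)
  moreover have "P \<noteq> vertex_pairs a"
    using less by blast
  ultimately obtain x where x: "x \<in> vertex_pairs a - P"
    by blast
  have "\<exists>y \<in> vertex_pairs a - P. closed_down (insert y P \<inter> CS a)"
  proof (cases "vertex_pairs a - P \<subseteq> CS a")
    case False
    then obtain y where "y \<in> vertex_pairs a - P" "y \<notin> CS a"
      by blast
    then show ?thesis
      using closed by (intro bexI[of _ y]) auto
  next
    case True
    with x have "x \<in> CS a - P"
      by blast
    then obtain j0 k0 where "{C j0, S k0} \<in> CS a - P"
      by (auto simp: CS_def)
    then obtain j k where jk: "{C j, S k} \<in> CS a - P"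
      and least: "\<And>p q. {C p, S q} \<in> CS a - P \<Longrightarrow> j + k \<le> p + q"
      using ex_has_least_nat[of "\<lambda>(p, q). {C p, S q} \<in> CS a - P" "(j0, k0)" "\<lambda>(p, q). p + q"]
      by fastforce
    have "closed_down (insert {C j, S k} (P \<inter> CS a))"
    proof (rule closed_down_insert[OF closed])
      fix p q
      assume "1 \<le> p" "p \<le> j" "1 \<le> q" "q \<le> k" "(p, q) \<noteq> (j, k)"
      moreover from this have "{C p, S q} \<in> CS a"
        using jk by (auto simp: C_S_in_CS_iff)
      ultimately show "{C p, S q} \<in> P \<inter> CS a"
        using least[of p q] by fastforce
    qed
    then show ?thesis
      using jk CS_subset_vertex_pairs by (intro bexI[of _ "{C j, S k}"]) (auto simp: Int_insert_left)
  qed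
  then show ?thesis
    using two_cover_insert[OF cover] two_cover_finite[OF cover] by (metis DiffE card_insert_disjoint)
qed

lemma two_cover_closed_down_pad:
  assumes "two_cover a P" and "closed_down (P \<inter> CS a)"
    and "card P \<le> n" and "n \<le> card (vertex_pairs a)"
  shows "\<exists>P'. two_cover a P' \<and> card P' = n \<and> closed_down (P' \<inter> CS a)"
  using assms(3)
proof (induction n rule: dec_induct)
  case base
  then show ?case
    using assms(1,2) by blast
next
  case (step m)
  then show ?case
    using two_cover_closed_down_grow assms(4) by (metis order.strict_trans2)
qed

definition pairs_RCS :: "(nat \<times> nat) set \<Rightarrow> (nat \<times> nat) set \<Rightarrow> (nat \<times> nat) set \<Rightarrow> vert set set" where
  "pairs_RCS X Y Z =
     (\<lambda>(i, j). {R i, C j}) ` X \<union> (\<lambda>(i, k). {R i, S k}) ` Y \<union> (\<lambda>(j, k). {C j, S k}) ` Z"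

lemma inj_on_doubleton_pair:
  assumes "inj f" and "inj g" and "\<And>x y. f x \<noteq> g y"
  shows "inj_on (\<lambda>(x, y). {f x, g y}) X"
proof (rule inj_onI, clarify)
  fix x y x' y'
  assume "{f x, g y} = {f x', g y'}"
  then have "f x = f x' \<and> g y = g y'"
    using assms(3) by (auto simp: doubleton_eq_iff)
  then show "x = x' \<and> y = y'"
    using assms(1,2) by (simp add: inj_eq)
qed

lemma card_pairs_RCS:
  assumes "finite X" and "finite Y" and "finite Z"
  shows "card (pairs_RCS X Y Z) = card X + card Y + card Z"
proof -
  define f g h where "f = (\<lambda>(i, j). {R i, C j})" and "g = (\<lambda>(i, k). {R i, S k})"
    and "h = (\<lambda>(j, k). {C j, S k})"
  have inj: "inj_on f X" "inj_on g Y" "inj_on h Z"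
    unfolding f_def g_def h_def by (auto intro!: inj_on_doubleton_pair simp: inj_def)
  have "card (f ` X \<union> g ` Y \<union> h ` Z) = card (f ` X \<union> g ` Y) + card (h ` Z)"
    using assms by (intro card_Un_disjoint) (auto simp: f_def g_def h_def doubleton_eq_iff)
  also have "card (f ` X \<union> g ` Y) = card (f ` X) + card (g ` Y)"
    using assms by (intro card_Un_disjoint) (auto simp: f_def g_def doubleton_eq_iff)
  finally show ?thesis
    using inj by (simp add: pairs_RCS_def f_def g_def h_def card_image)
qed

lemma R_C_in_pairs_RCS: "(i, j) \<in> X \<Longrightarrow> {R i, C j} \<in> pairs_RCS X Y Z"
  by (force simp: pairs_RCS_def)

lemma R_S_in_pairs_RCS: "(i, k) \<in> Y \<Longrightarrow> {R i, S k} \<in> pairs_RCS X Y Z"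
  by (force simp: pairs_RCS_def)

lemma C_S_in_pairs_RCS_iff: "{C j, S k} \<in> pairs_RCS X Y Z \<longleftrightarrow> (j, k) \<in> Z"
  by (force simp: pairs_RCS_def doubleton_eq_iff)

definition staircase_cover :: "nat list \<Rightarrow> (nat \<Rightarrow> nat) \<Rightarrow> (nat \<Rightarrow> nat) \<Rightarrow> vert set set" where
  "staircase_cover a \<alpha> \<beta> = pairs_RCS
     (SIGMA i:{1..length a}. {\<alpha> i<..a ! (i - 1)})
     (SIGMA i:{1..length a}. {\<beta> i<..a ! (i - 1)})
     (\<Union>i\<in>{1..length a}. {1..\<alpha> i} \<times> {1..\<beta> i})"

lemma card_staircase_cover:
  "card (staircase_cover a \<alpha> \<beta>) =
     (\<Sum>i=1..length a. a ! (i - 1) - \<alpha> i) + (\<Sum>i=1..length a. a ! (i - 1) - \<beta> i)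
     + card (\<Union>i\<in>{1..length a}. {1..\<alpha> i} \<times> {1..\<beta> i})"
  by (simp add: staircase_cover_def card_pairs_RCS)

lemma two_cover_staircase_cover:
  assumes "young a"
    and "\<And>i. 1 \<le> i \<Longrightarrow> i \<le> length a \<Longrightarrow> \<alpha> i \<le> a ! (i - 1) \<and> \<beta> i \<le> a ! (i - 1)"
  shows "two_cover a (staircase_cover a \<alpha> \<beta>)"
proof -
  have row_le: "a ! (i - 1) \<le> first_row a" if "1 \<le> i" "i \<le> length a" for i
    using young_nth_le_first_row[OF assms(1)] that by simp
  have "p \<subseteq> verts a \<and> card p = 2" if "p \<in> staircase_cover a \<alpha> \<beta>" for p
    using that row_le assms(2) unfolding staircase_cover_def pairs_RCS_def verts_def
    by (fastforce intro: order.trans)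
  moreover have "\<exists>p \<in> staircase_cover a \<alpha> \<beta>. p \<subseteq> e" if "e \<in> edges a" for e
  proof -
    from that obtain i j k where e: "e = {R i, C j, S k}" and i: "i \<in> {1..length a}"
      and j: "j \<in> {1..a ! (i - 1)}" and k: "k \<in> {1..a ! (i - 1)}"
      by (auto simp: edges_def)
    consider "\<alpha> i < j" | "\<beta> i < k" | "j \<le> \<alpha> i" "k \<le> \<beta> i"
      by linarith
    then show ?thesis
    proof cases
      case 1
      with i j have "{R i, C j} \<in> staircase_cover a \<alpha> \<beta>"
        unfolding staircase_cover_def by (intro R_C_in_pairs_RCS) auto
      then show ?thesis
        by (rule bexI[rotated]) (auto simp: e)
    next
      case 2
      with i k have "{R i, S k} \<in> staircase_cover a \<alpha> \<beta>"
        unfolding staircase_cover_def by (intro R_S_in_pairs_RCS) auto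
      then show ?thesis
        by (rule bexI[rotated]) (auto simp: e)
    next
      case 3
      with i j k have "{C j, S k} \<in> staircase_cover a \<alpha> \<beta>"
        unfolding staircase_cover_def C_S_in_pairs_RCS_iff by auto
      then show ?thesis
        by (rule bexI[rotated]) (auto simp: e)
    qed
  qed
  ultimately show ?thesis
    by (simp add: two_cover_def)
qed

lemma closed_down_staircase_cover: "closed_down (staircase_cover a \<alpha> \<beta> \<inter> CS a)"
  unfolding closed_down_def staircase_cover_def C_S_in_pairs_RCS_iff Int_iff C_S_in_CS_iff
  by fastforce

definition missing_RC :: "nat list \<Rightarrow> vert set set \<Rightarrow> nat \<Rightarrow> nat set" where
  "missing_RC a P i = {j \<in> {1..a ! (i - 1)}. {R i, C j} \<notin> P}"

definition missing_RS :: "nat list \<Rightarrow> vert set set \<Rightarrow> nat \<Rightarrow> nat set" where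
  "missing_RS a P i = {k \<in> {1..a ! (i - 1)}. {R i, S k} \<notin> P}"

lemma missing_RC_subset: "missing_RC a P i \<subseteq> {1..a ! (i - 1)}"
  by (auto simp: missing_RC_def)

lemma missing_RS_subset: "missing_RS a P i \<subseteq> {1..a ! (i - 1)}"
  by (auto simp: missing_RS_def)

lemma two_cover_C_S_mem:
  assumes "two_cover a P" and "i \<in> {1..length a}"
    and "j \<in> missing_RC a P i" and "k \<in> missing_RS a P i"
  shows "{C j, S k} \<in> P"
proof -
  have "{R i, C j, S k} \<in> edges a"
    using assms(2-4) by (auto simp: edges_def missing_RC_def missing_RS_def)
  then obtain p where "p \<in> P" "p \<subseteq> {R i, C j, S k}" "card p = 2"
    using assms(1) by (auto simp: two_cover_def)
  then have "p = {R i, C j} \<or> p = {R i, S k} \<or> p = {C j, S k}"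
    by (auto simp: card_2_iff doubleton_eq_iff)
  with \<open>p \<in> P\<close> show ?thesis
    using assms(3,4) by (auto simp: missing_RC_def missing_RS_def)
qed

lemma pairs_RCS_missing_subset:
  assumes "two_cover a P"
  shows "pairs_RCS
     (SIGMA i:{1..length a}. {1..a ! (i - 1)} - missing_RC a P i)
     (SIGMA i:{1..length a}. {1..a ! (i - 1)} - missing_RS a P i)
     (\<Union>i\<in>{1..length a}. missing_RC a P i \<times> missing_RS a P i) \<subseteq> P"
  using two_cover_C_S_mem[OF assms]
  by (auto simp: pairs_RCS_def missing_RC_def missing_RS_def)

lemma card_staircase_cover_le:
  assumes "two_cover a P"
  shows "card (staircase_cover a (\<lambda>i. card (missing_RC a P i)) (\<lambda>i. card (missing_RS a P i)))
    \<le> card P"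
proof -
  have fin: "finite (missing_RC a P i)" "finite (missing_RS a P i)" for i
    using finite_subset[OF missing_RC_subset] finite_subset[OF missing_RS_subset] by auto
  have "card (\<Union>i\<in>{1..length a}. {1..card (missing_RC a P i)} \<times> {1..card (missing_RS a P i)})
    \<le> card (\<Union>i\<in>{1..length a}. missing_RC a P i \<times> missing_RS a P i)"
    using fin by (intro card_UN_Times_compress) auto
  moreover have "card (pairs_RCS
     (SIGMA i:{1..length a}. {1..a ! (i - 1)} - missing_RC a P i)
     (SIGMA i:{1..length a}. {1..a ! (i - 1)} - missing_RS a P i)
     (\<Union>i\<in>{1..length a}. missing_RC a P i \<times> missing_RS a P i)) \<le> card P"
    using two_cover_finite[OF assms] pairs_RCS_missing_subset[OF assms] by (rule card_mono)
  moreover have "card ({1..a ! (i - 1)} - missing_RC a P i) = a ! (i - 1) - card (missing_RC a P i)"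
    "card ({1..a ! (i - 1)} - missing_RS a P i) = a ! (i - 1) - card (missing_RS a P i)" for i
    using card_Diff_subset[OF fin(1) missing_RC_subset] card_Diff_subset[OF fin(2) missing_RS_subset]
    by simp_all
  ultimately show ?thesis
    using fin by (simp add: card_staircase_cover card_pairs_RCS)
qed

theorem lemma5:
  fixes a :: "nat list" and P :: "vert set set"
  assumes "young a" and "two_cover a P"
  shows "\<exists>P'. two_cover a P' \<and> card P' = card P \<and> closed_down (P' \<inter> CS a)"
proof -
  define P\<^sub>0 where
    "P\<^sub>0 = staircase_cover a (\<lambda>i. card (missing_RC a P i)) (\<lambda>i. card (missing_RS a P i))"
  have "two_cover a P\<^sub>0"
    unfolding P\<^sub>0_def using assms(1) card_mono[OF _ missing_RC_subset] card_mono[OF _ missing_RS_subset]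
    by (intro two_cover_staircase_cover) auto
  moreover have "card P\<^sub>0 \<le> card P"
    unfolding P\<^sub>0_def using assms(2) by (rule card_staircase_cover_le)
  moreover have "card P \<le> card (vertex_pairs a)"
    using finite_vertex_pairs two_cover_subset_vertex_pairs[OF assms(2)] by (rule card_mono)
  moreover have "closed_down (P\<^sub>0 \<inter> CS a)"
    unfolding P\<^sub>0_def by (rule closed_down_staircase_cover)
  ultimately show ?thesis
    using two_cover_closed_down_pad by blast
qed

end
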